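(* There exist a financial system $S$ in the base model (all contracts of the same priority) and distinct banks $u,v_1,v_2$, with a debt contract of positive weight from $u$ to $v_1$ and one from $u$ to $v_2$, such that the following holds. For $(s_1,s_2)\in\{C,D\}^2$ let $S_{s_1s_2}$ be the system obtained from $S$ by deleting the debt contract from $u$ to $v_i$ for exactly those $i$ with $s_i=C$. Then each $S_{s_1s_2}$ has exactly one solution, and the payoffs $(q_{v_1},q_{v_2})$ at that solution are $(3,3)$ for $CC$, $(8/3,8/3)$ for $DD$, $(3/2,4)$ for $CD$, and $(4,3/2)$ for $DC$. In particular, in the two-player game where bank $v_i$ chooses $s_i$ and receives its payoff in $S_{s_1s_2}$, $D$ is a strictly dominant strategy for each player, while both players receive strictly more under $CC$ than under $DD$.
   Context: A financial system with payment priorities consists of: a finite set $V$ of banks; external assets $e_v\ge 0$ for each $v\in V$; a number $P\ge 1$ of priority levels; and a finite set of contracts, each of which is either a debt contract from a debtor $u$ to a creditor $v\neq u$ with weight $c>0$, or a credit default swap (CDS) from a debtor $u$ to a creditor $v\neq u$ in reference to a bank $w\notin\{u,v\}$ (the reference entity) with weight $c>0$. Every contract has a priority in $\{1,\dots,P\}$ (1 is the highest priority). It is assumed that every bank that is the reference entity of some CDS is the debtor of at least one debt contract of positive weight. Given a recovery rate vector $r\in[0,1]^V$: the liability of a contract $k$ is $l_k(r)=c$ if $k$ is a debt of weight $c$, and $l_k(r)=c\,(1-r_w)$ if $k$ is a CDS of weight $c$ in reference to $w$. For a bank $v$, $l_v(r)$ is the sum of the liabilities of the contracts with debtor $v$;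 $l_v^{(\rho)}(r)$ is the sum of the liabilities of contracts with debtor $v$ and priority $\rho$; and $l_v^{(\le\rho)}(r)=\sum_{i=1}^{\rho}l_v^{(i)}(r)$ (with $l_v^{(\le 0)}=0$). The payment on a contract $k$ with debtor $v$ and priority $\rho$ is $p_k(r)=l_k(r)\cdot\min\{1,\max\{0,(r_v l_v(r)-l_v^{(\le\rho-1)}(r))/l_v^{(\rho)}(r)\}\}$ (and $p_k(r)=0$ if $l_v^{(\rho)}(r)=0$). The assets of $v$ are $a_v(r)=e_v+\sum_k p_k(r)$, summing over contracts $k$ with creditor $v$. A vector $r\in[0,1]^V$ is a solution (clearing vector) if for every $v\in V$: $r_v=1$ when $a_v(r)\ge l_v(r)$, and $r_v=a_v(r)/l_v(r)$ when $a_v(r)<l_v(r)$. The payoff of $v$ is $q_v(r)=\max\{a_v(r)-l_v(r),0\}$. When $P=1$, payments reduce to $p_k(r)=r_v\,l_k(r)$ (principle of proportionality); this is called the base model. *)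

theory Defs
  imports Complex_Main
begin

text \<open>Contracts: Debt debtor creditor weight priority;
  CDS debtor creditor reference_entity weight priority.\<close>
datatype 'b contract =
    Debt 'b 'b real nat
  | CDS 'b 'b 'b real nat

fun debtor :: "'b contract \<Rightarrow> 'b" where
  "debtor (Debt u v c p) = u"
| "debtor (CDS u v w c p) = u"

fun creditor :: "'b contract \<Rightarrow> 'b" where
  "creditor (Debt u v c p) = v"
| "creditor (CDS u v w c p) = v"

fun weight :: "'b contract \<Rightarrow> real" where
  "weight (Debt u v c p) = c"
| "weight (CDS u v w c p) = c"

fun prio :: "'b contract \<Rightarrow> nat" where
  "prio (Debt u v c p) = p"
| "prio (CDS u v w c p) = p"

text \<open>A financial system; the finite collection of contracts is a list
  (so that several contracts with identical data are allowed).\<close>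
record 'b fsys =
  banks :: "'b set"
  ext :: "'b \<Rightarrow> real"
  nprio :: nat
  contracts :: "'b contract list"

definition wf_contract :: "'b fsys \<Rightarrow> 'b contract \<Rightarrow> bool" where
  "wf_contract S k \<longleftrightarrow>
     debtor k \<in> banks S \<and> creditor k \<in> banks S \<and> debtor k \<noteq> creditor k \<and>
     weight k > 0 \<and> 1 \<le> prio k \<and> prio k \<le> nprio S \<and>
     (case k of Debt u v c p \<Rightarrow> True
      | CDS u v w c p \<Rightarrow> w \<in> banks S \<and> w \<noteq> u \<and> w \<noteq> v \<and>
           (\<exists>k'\<in>set (contracts S). \<exists>v' c' p'. k' = Debt w v' c' p' \<and> c' > 0))"

definition wf_fsys :: "'b fsys \<Rightarrow> bool" where
  "wf_fsys S \<longleftrightarrow> finite (banks S) \<and> (\<forall>v\<in>banks S. ext S v \<ge> 0) \<and> nprio S \<ge> 1 \<and>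
     (\<forall>k\<in>set (contracts S). wf_contract S k)"

definition base_model :: "'b fsys \<Rightarrow> bool" where
  "base_model S \<longleftrightarrow> wf_fsys S \<and> nprio S = 1"

fun liab :: "('b \<Rightarrow> real) \<Rightarrow> 'b contract \<Rightarrow> real" where
  "liab r (Debt u v c p) = c"
| "liab r (CDS u v w c p) = c * (1 - r w)"

definition liab_bank :: "'b fsys \<Rightarrow> ('b \<Rightarrow> real) \<Rightarrow> 'b \<Rightarrow> real" where
  "liab_bank S r v = sum_list (map (liab r) (filter (\<lambda>k. debtor k = v) (contracts S)))"

definition liab_prio :: "'b fsys \<Rightarrow> ('b \<Rightarrow> real) \<Rightarrow> 'b \<Rightarrow> nat \<Rightarrow> real" where
  "liab_prio S r v \<rho> =
     sum_list (map (liab r) (filter (\<lambda>k. debtor k = v \<and> prio k = \<rho>) (contracts S)))"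

definition liab_upto :: "'b fsys \<Rightarrow> ('b \<Rightarrow> real) \<Rightarrow> 'b \<Rightarrow> nat \<Rightarrow> real" where
  "liab_upto S r v \<rho> = (\<Sum>i=1..\<rho>. liab_prio S r v i)"

definition pay :: "'b fsys \<Rightarrow> ('b \<Rightarrow> real) \<Rightarrow> 'b contract \<Rightarrow> real" where
  "pay S r k =
     (let v = debtor k; \<rho> = prio k; L = liab_prio S r v \<rho> in
      if L = 0 then 0
      else liab r k * min 1 (max 0 ((r v * liab_bank S r v - liab_upto S r v (\<rho> - 1)) / L)))"

definition assets :: "'b fsys \<Rightarrow> ('b \<Rightarrow> real) \<Rightarrow> 'b \<Rightarrow> real" where
  "assets S r v = ext S v + sum_list (map (pay S r) (filter (\<lambda>k. creditor k = v) (contracts S)))"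

definition is_solution :: "'b fsys \<Rightarrow> ('b \<Rightarrow> real) \<Rightarrow> bool" where
  "is_solution S r \<longleftrightarrow>
     (\<forall>v\<in>banks S. 0 \<le> r v \<and> r v \<le> 1 \<and>
        (assets S r v \<ge> liab_bank S r v \<longrightarrow> r v = 1) \<and>
        (assets S r v < liab_bank S r v \<longrightarrow> r v = assets S r v / liab_bank S r v))"

definition unique_solution :: "'b fsys \<Rightarrow> ('b \<Rightarrow> real) \<Rightarrow> bool" where
  "unique_solution S r \<longleftrightarrow> is_solution S r \<and>
     (\<forall>r'. is_solution S r' \<longrightarrow> (\<forall>v\<in>banks S. r' v = r v))"

definition payoff :: "'b fsys \<Rightarrow> ('b \<Rightarrow> real) \<Rightarrow> 'b \<Rightarrow> real" where
  "payoff S r v = max (assets S r v - liab_bank S r v) 0"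

definition delete_contract :: "'b contract \<Rightarrow> 'b fsys \<Rightarrow> 'b fsys" where
  "delete_contract k S = S\<lparr>contracts := remove1 k (contracts S)\<rparr>"

text \<open>Strategy True = C (cooperate: delete the debt), False = D.\<close>
definition game_sys :: "'b fsys \<Rightarrow> 'b contract \<Rightarrow> 'b contract \<Rightarrow> bool \<Rightarrow> bool \<Rightarrow> 'b fsys" where
  "game_sys S k1 k2 s1 s2 =
     (if s1 then delete_contract k1 else id) ((if s2 then delete_contract k2 else id) S)"

end

theory Submission
  imports Defs
begin

text \<open>Bank 0 holds 5/2 in cash and owes 25 to each of banks 1 and 2; these hold 3 in cash
  each and have each sold bank 3 a CDS of weight 5/3 on bank 0. Forgiving its claim on bank 0
  (strategy C) raises bank 0's recovery rate and so lowers the CDS liabilities of both banks 1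
  and 2, but hands bank 0's cash to the other creditor. Bank 0 receives nothing, and banks 1
  and 2 stay solvent whatever bank 0 pays (3 \<ge> 5/3), so every variant of the system has
  exactly one clearing vector: bank 0 recovers 1, 1/10 or 1/20 according as 0, 1 or 2 debts
  remain, every other bank recovers 1, and the payoffs follow by arithmetic.\<close>

text \<open>For \<open>L = 0\<close> this is 1, whereas \<open>min 1 (a / L)\<close> would give 0 since \<open>a / 0 = 0\<close>.\<close>
definition recovery :: "real \<Rightarrow> real \<Rightarrow> real" where
  "recovery a L = (if L \<le> a then 1 else a / L)"

lemma recovery_bounds:
  assumes "0 \<le> a"
  shows "0 \<le> recovery a L" "recovery a L \<le> 1"
  using assms by (auto simp: recovery_def)

lemma clearing_condition_iff_recovery:
  fixes a L x :: real
  assumes "0 \<le> a"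
  shows "(0 \<le> x \<and> x \<le> 1 \<and> (L \<le> a \<longrightarrow> x = 1) \<and> (a < L \<longrightarrow> x = a / L))
         \<longleftrightarrow> x = recovery a L"
  using assms by (auto simp: recovery_def)

lemma is_solution_iff_recovery:
  assumes "\<And>v. v \<in> banks S \<Longrightarrow> 0 \<le> assets S r v"
  shows "is_solution S r \<longleftrightarrow>
           (\<forall>v\<in>banks S. r v = recovery (assets S r v) (liab_bank S r v))"
  using assms clearing_condition_iff_recovery unfolding is_solution_def by (auto simp: not_le)

lemma pay_nonneg: "0 \<le> liab r k \<Longrightarrow> 0 \<le> pay S r k"
  by (simp add: pay_def Let_def)

lemma pay_single_priority:
  assumes prio1: "\<forall>k'\<in>set (contracts S). prio k' = 1"
    and liab_nonneg: "\<forall>k'\<in>set (contracts S). 0 \<le> liab r k'"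
    and k: "k \<in> set (contracts S)"
    and r_bounds: "0 \<le> r (debtor k)" "r (debtor k) \<le> 1"
  shows "pay S r k = r (debtor k) * liab r k"
proof -
  let ?v = "debtor k" and ?L = "liab_bank S r (debtor k)"
  have prio_k: "prio k = 1" using prio1 k by blast
  have "liab_prio S r ?v 1 = ?L"
    unfolding liab_prio_def liab_bank_def using prio1 by (metis (mono_tags, lifting) filter_cong)
  then have pay_k: "pay S r k = (if ?L = 0 then 0 else liab r k * min 1 (max 0 (r ?v * ?L / ?L)))"
    by (simp add: pay_def prio_k liab_upto_def)
  show ?thesis
  proof (cases "?L = 0")
    case True
    have "\<forall>x\<in>set (map (liab r) (filter (\<lambda>k'. debtor k' = ?v) (contracts S))). x = 0"
      using True liab_nonneg unfolding liab_bank_def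
      by (subst sum_list_nonneg_eq_0_iff[symmetric]) auto
    then have "liab r k = 0" using k by simp
    then show ?thesis using pay_k by simp
  next
    case False
    then show ?thesis using pay_k r_bounds by simp
  qed
qed

text \<open>Bank 0 is the debtor \<open>u\<close>, banks 1 and 2 are \<open>v\<^sub>1\<close> and \<open>v\<^sub>2\<close>, and bank 3 is the
  buyer of their CDSs on bank 0.\<close>
definition cds_dilemma :: "nat fsys" where
  "cds_dilemma =
     \<lparr>banks = {0, 1, 2, 3}, ext = (\<lambda>v. if v = 0 then 5/2 else if v = 3 then 0 else 3), nprio = 1,
      contracts = [Debt 0 1 25 1, Debt 0 2 25 1, CDS 1 3 0 (5/3) 1, CDS 2 3 0 (5/3) 1]\<rparr>"

definition dilemma :: "bool \<Rightarrow> bool \<Rightarrow> nat fsys" where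
  "dilemma s1 s2 = cds_dilemma\<lparr>contracts :=
     (if s1 then [] else [Debt 0 1 25 1]) @ (if s2 then [] else [Debt 0 2 25 1]) @
     [CDS 1 3 0 (5/3) 1, CDS 2 3 0 (5/3) 1]\<rparr>"

lemma game_sys_cds_dilemma:
  "game_sys cds_dilemma (Debt 0 1 25 1) (Debt 0 2 25 1) s1 s2 = dilemma s1 s2"
  by (simp add: game_sys_def delete_contract_def cds_dilemma_def dilemma_def)

lemma banks_dilemma: "banks (dilemma s1 s2) = {0, 1, 2, 3}"
  and ext_dilemma: "ext (dilemma s1 s2) v = (if v = 0 then 5/2 else if v = 3 then 0 else 3)"
  and contracts_dilemma: "contracts (dilemma s1 s2) =
     (if s1 then [] else [Debt 0 1 25 1]) @ (if s2 then [] else [Debt 0 2 25 1]) @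
     [CDS 1 3 0 (5/3) 1, CDS 2 3 0 (5/3) 1]"
  by (simp_all add: dilemma_def cds_dilemma_def)

definition dilemma_debt :: "bool \<Rightarrow> bool \<Rightarrow> real" where
  "dilemma_debt s1 s2 = (if s1 then 0 else 25) + (if s2 then 0 else 25)"

definition dilemma_clearing :: "bool \<Rightarrow> bool \<Rightarrow> nat \<Rightarrow> real" where
  "dilemma_clearing s1 s2 = (\<lambda>v. if v = 0 then recovery (5/2) (dilemma_debt s1 s2) else 1)"

lemma liab_dilemma_nonneg:
  "r 0 \<le> 1 \<Longrightarrow> \<forall>k\<in>set (contracts (dilemma s1 s2)). 0 \<le> liab r k"
  by (simp add: contracts_dilemma)

lemma pay_dilemma_debt:
  assumes "k \<in> set (contracts (dilemma s1 s2))" "debtor k = 0" "0 \<le> r 0" "r 0 \<le> 1"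
  shows "pay (dilemma s1 s2) r k = r 0 * liab r k"
  using pay_single_priority[OF _ liab_dilemma_nonneg assms(1)] assms
  by (simp add: contracts_dilemma)

lemma dilemma_balance_sheet:
  assumes "0 \<le> r 0" "r 0 \<le> 1"
  shows "liab_bank (dilemma s1 s2) r 0 = dilemma_debt s1 s2"
    and "liab_bank (dilemma s1 s2) r 1 = 5/3 * (1 - r 0)"
    and "liab_bank (dilemma s1 s2) r 2 = 5/3 * (1 - r 0)"
    and "liab_bank (dilemma s1 s2) r 3 = 0"
    and "assets (dilemma s1 s2) r 0 = 5/2"
    and "assets (dilemma s1 s2) r 1 = 3 + (if s1 then 0 else 25 * r 0)"
    and "assets (dilemma s1 s2) r 2 = 3 + (if s2 then 0 else 25 * r 0)"
    and "0 \<le> assets (dilemma s1 s2) r 3"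
  using assms
  by (simp_all add: liab_bank_def dilemma_debt_def assets_def ext_dilemma contracts_dilemma
      pay_dilemma_debt pay_nonneg)

lemma is_solution_dilemma_iff:
  "is_solution (dilemma s1 s2) r \<longleftrightarrow> (\<forall>v\<in>{0, 1, 2, 3}. r v = dilemma_clearing s1 s2 v)"
  (is "?solution \<longleftrightarrow> ?clearing")
proof -
  have iff_if_bounded: "?solution \<longleftrightarrow> ?clearing" if r0: "0 \<le> r 0" "r 0 \<le> 1"
  proof -
    let ?S = "dilemma s1 s2"
    note sheet = dilemma_balance_sheet[of r s1 s2, OF r0]
    have "recovery (assets ?S r 0) (liab_bank ?S r 0) = dilemma_clearing s1 s2 0"
      by (simp add: sheet(1,5) dilemma_clearing_def)
    moreover have "recovery (assets ?S r 1) (liab_bank ?S r 1) = 1"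
      and "recovery (assets ?S r 2) (liab_bank ?S r 2) = 1"
      and "recovery (assets ?S r 3) (liab_bank ?S r 3) = 1"
      using r0 sheet by (cases s1; cases s2; simp add: recovery_def)+
    moreover have "?solution \<longleftrightarrow> (\<forall>v\<in>{0, 1, 2, 3}. r v = recovery (assets ?S r v) (liab_bank ?S r v))"
      using sheet r0 by (subst is_solution_iff_recovery) (auto simp: banks_dilemma)
    ultimately show ?thesis
      by (simp add: dilemma_clearing_def)
  qed
  have "0 \<le> r 0 \<and> r 0 \<le> 1" if ?solution
    using that by (simp add: is_solution_def banks_dilemma)
  moreover have "0 \<le> r 0 \<and> r 0 \<le> 1" if ?clearing
    using that recovery_bounds[of "5/2"] by (simp add: dilemma_clearing_def)
  ultimately show ?thesis
    using iff_if_bounded by blast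
qed

lemma unique_solution_dilemma: "unique_solution (dilemma s1 s2) (dilemma_clearing s1 s2)"
  by (simp add: unique_solution_def is_solution_dilemma_iff banks_dilemma)

lemma payoff_dilemma:
  "payoff (dilemma s1 s2) (dilemma_clearing s1 s2) 1 =
     (if s1 then if s2 then 3 else 3/2 else if s2 then 4 else 8/3)"
  "payoff (dilemma s1 s2) (dilemma_clearing s1 s2) 2 =
     (if s2 then if s1 then 3 else 3/2 else if s1 then 4 else 8/3)"
proof -
  have r0: "0 \<le> dilemma_clearing s1 s2 0" "dilemma_clearing s1 s2 0 \<le> 1"
    using recovery_bounds[of "5/2"] by (simp_all add: dilemma_clearing_def)
  note sheet = dilemma_balance_sheet[of "dilemma_clearing s1 s2" s1 s2, OF r0]
  show "payoff (dilemma s1 s2) (dilemma_clearing s1 s2) 1 =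
     (if s1 then if s2 then 3 else 3/2 else if s2 then 4 else 8/3)"
    "payoff (dilemma s1 s2) (dilemma_clearing s1 s2) 2 =
     (if s2 then if s1 then 3 else 3/2 else if s1 then 4 else 8/3)"
    using sheet by (cases s1; cases s2; simp add: payoff_def dilemma_clearing_def recovery_def dilemma_debt_def)+
qed

theorem mainTheorem10:
  shows "\<exists>(S :: nat fsys) u v1 v2 c1 c2 p1 p2 q1 q2.
    base_model S \<and> u \<in> banks S \<and> v1 \<in> banks S \<and> v2 \<in> banks S \<and>
    u \<noteq> v1 \<and> u \<noteq> v2 \<and> v1 \<noteq> v2 \<and>
    Debt u v1 c1 p1 \<in> set (contracts S) \<and> c1 > 0 \<and>
    Debt u v2 c2 p2 \<in> set (contracts S) \<and> c2 > 0 \<and>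
    (\<forall>s1 s2. \<exists>r. unique_solution (game_sys S (Debt u v1 c1 p1) (Debt u v2 c2 p2) s1 s2) r \<and>
        payoff (game_sys S (Debt u v1 c1 p1) (Debt u v2 c2 p2) s1 s2) r v1 = q1 s1 s2 \<and>
        payoff (game_sys S (Debt u v1 c1 p1) (Debt u v2 c2 p2) s1 s2) r v2 = q2 s1 s2) \<and>
    q1 True True = 3 \<and> q2 True True = 3 \<and>
    q1 False False = 8/3 \<and> q2 False False = 8/3 \<and>
    q1 True False = 3/2 \<and> q2 True False = 4 \<and>
    q1 False True = 4 \<and> q2 False True = 3/2 \<and>
    (\<forall>s2. q1 False s2 > q1 True s2) \<and> (\<forall>s1. q2 s1 False > q2 s1 True) \<and>
    q1 True True > q1 False False \<and> q2 True True > q2 False False"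
proof -
  define q1 where "q1 s1 s2 = payoff (dilemma s1 s2) (dilemma_clearing s1 s2) 1" for s1 s2
  define q2 where "q2 s1 s2 = payoff (dilemma s1 s2) (dilemma_clearing s1 s2) 2" for s1 s2
  have q1_table: "q1 s1 s2 = (if s1 then if s2 then 3 else 3/2 else if s2 then 4 else 8/3)"
    and q2_table: "q2 s1 s2 = (if s2 then if s1 then 3 else 3/2 else if s1 then 4 else 8/3)" for s1 s2
    unfolding q1_def q2_def by (fact payoff_dilemma)+
  have game: "\<forall>s1 s2. \<exists>r.
      unique_solution (game_sys cds_dilemma (Debt 0 1 25 1) (Debt 0 2 25 1) s1 s2) r \<and>
      payoff (game_sys cds_dilemma (Debt 0 1 25 1) (Debt 0 2 25 1) s1 s2) r 1 = q1 s1 s2 \<and>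
      payoff (game_sys cds_dilemma (Debt 0 1 25 1) (Debt 0 2 25 1) s1 s2) r 2 = q2 s1 s2"
    unfolding game_sys_cds_dilemma q1_def q2_def using unique_solution_dilemma by blast
  have base: "base_model cds_dilemma"
    by (simp add: cds_dilemma_def base_model_def wf_fsys_def wf_contract_def)
  have members: "{0, 1, 2} \<subseteq> banks cds_dilemma"
    "{Debt 0 1 25 1, Debt 0 2 25 1} \<subseteq> set (contracts cds_dilemma)"
    by (simp_all add: cds_dilemma_def)
  show ?thesis
    by (insert game base members, rule exI[of _ cds_dilemma], rule exI[of _ 0], rule exI[of _ 1],
        rule exI[of _ 2], rule exI[of _ 25], rule exI[of _ 25], rule exI[of _ 1], rule exI[of _ 1],
        rule exI[of _ q1], rule exI[of _ q2], simp add: q1_table q2_table)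
qed

end
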